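(* Let $\ell\ge 2$ and let $G$ be a bipartite graph with an edge $uv\in E(G)$. Suppose $G$ has $\ell$ pairwise vertex-disjoint edges $w_iz_i$ ($1\le i\le \ell$) such that $w_1,\dots,w_\ell\in N(v)\setminus\{u\}$, $z_1,\dots,z_\ell\in N(u)\setminus\{v\}$, and $(w_{i-1},z_{i-1},w_i,z_i)$ is rich for every $2\le i\le\ell$. Then $G$ contains a copy of $C_{2\ell}^{\square}$.
   Context: For distinct vertices $w,z,w',z'$ of $G$, the $4$-tuple $(w,z,w',z')$ is rich if $wz,w'z'\in E(G)$ and there are at least $4\ell$ pairwise vertex-disjoint edges $xy\in E(G)$ with $wx,xw',zy,yz'\in E(G)$. $N(v)$ is the neighbourhood of $v$. $C_{2\ell}^{\square}$ consists of two vertex-disjoint $2\ell$-cycles $a_1\cdots a_{2\ell}a_1$, $b_1\cdots b_{2\ell}b_1$ plus the edges $a_ib_i$. *)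

theory Defs
  imports Main
begin

definition sgraph :: "'a set \<Rightarrow> ('a \<Rightarrow> 'a \<Rightarrow> bool) \<Rightarrow> bool" where
  "sgraph V E \<longleftrightarrow> finite V \<and>
     (\<forall>x y. E x y \<longrightarrow> x \<in> V \<and> y \<in> V \<and> x \<noteq> y \<and> E y x)"

definition bipartite :: "'a set \<Rightarrow> ('a \<Rightarrow> 'a \<Rightarrow> bool) \<Rightarrow> bool" where
  "bipartite V E \<longleftrightarrow> (\<exists>A B. A \<inter> B = {} \<and> A \<union> B = V \<and>
     (\<forall>x y. E x y \<longrightarrow> (x \<in> A \<and> y \<in> B) \<or> (x \<in> B \<and> y \<in> A)))"

definition nbhd :: "('a \<Rightarrow> 'a \<Rightarrow> bool) \<Rightarrow> 'a \<Rightarrow> 'a set" where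
  "nbhd E v = {x. E v x}"

definition rich :: "nat \<Rightarrow> ('a \<Rightarrow> 'a \<Rightarrow> bool) \<Rightarrow> 'a \<Rightarrow> 'a \<Rightarrow> 'a \<Rightarrow> 'a \<Rightarrow> bool" where
  "rich l E w z w' z' \<longleftrightarrow> distinct [w, z, w', z'] \<and> E w z \<and> E w' z' \<and>
     (\<exists>M :: ('a \<times> 'a) set. finite M \<and> card M \<ge> 4 * l \<and>
        (\<forall>(x, y) \<in> M. E x y \<and> E w x \<and> E x w' \<and> E z y \<and> E y z') \<and>
        (\<forall>p \<in> M. \<forall>q \<in> M. p \<noteq> q \<longrightarrow> {fst p, snd p} \<inter> {fst q, snd q} = {}))"

text \<open>G contains a copy of the prism C_{2l}^square: two vertex-disjoint 2l-cycles
a_0...a_{2l-1}, b_0...b_{2l-1} plus the rungs a_i b_i (indices mod 2l), embedded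
injectively as a (not necessarily induced) subgraph.\<close>
definition has_prism_copy :: "nat \<Rightarrow> 'a set \<Rightarrow> ('a \<Rightarrow> 'a \<Rightarrow> bool) \<Rightarrow> bool" where
  "has_prism_copy l V E \<longleftrightarrow> (\<exists>a b :: nat \<Rightarrow> 'a.
     inj_on a {..<2*l} \<and> inj_on b {..<2*l} \<and> a ` {..<2*l} \<inter> b ` {..<2*l} = {} \<and>
     a ` {..<2*l} \<subseteq> V \<and> b ` {..<2*l} \<subseteq> V \<and>
     (\<forall>i < 2*l. E (a i) (a (Suc i mod (2*l))) \<and> E (b i) (b (Suc i mod (2*l))) \<and>
                E (a i) (b i)))"

end

(*
  Choose for every 2 \<le> i \<le> l an edge x_i y_i from the matching witnessing that
  (w_{i-1}, z_{i-1}, w_i, z_i) is rich. Then v w_1 x_2 w_2 ... x_l w_l and u z_1 y_2 z_2 ... y_l z_l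
  are 2l-cycles joined by the rungs vu, w_i z_i and x_i y_i, i.e. a copy of the prism, provided all
  the rungs are vertex-disjoint. The x_i y_i can be chosen greedily: at most 2l + 2 vertices u, v,
  w_j, z_j and 2(l - 2) vertices of earlier choices are forbidden, and each forbidden vertex meets at
  most one of the at least 4l disjoint candidates.
*)

theory Submission
  imports Defs
begin

abbreviation ends :: "'a \<times> 'a \<Rightarrow> 'a set" where
  "ends p \<equiv> {fst p, snd p}"

lemma card_ends_le: "card (ends p) \<le> 2"
  by (simp add: card_insert_if)

lemma card_UN_ends_le:
  assumes "finite I"
  shows "card (\<Union>i\<in>I. ends (f i)) \<le> 2 * card I"
proof -
  have "card (\<Union>i\<in>I. ends (f i)) \<le> (\<Sum>i\<in>I. card (ends (f i)))"
    using card_UN_le[OF assms] .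
  also have "\<dots> \<le> (\<Sum>i\<in>I. 2)"
    by (intro sum_mono card_ends_le)
  finally show ?thesis by simp
qed

lemma exists_pair_avoiding:
  assumes "pairwise (\<lambda>p q. disjnt (ends p) (ends q)) M" "finite S" "card S < card M"
  shows "\<exists>q\<in>M. disjnt (ends q) S"
proof (rule ccontr)
  assume "\<not> ?thesis"
  then have hit: "\<forall>q\<in>M. fst q \<in> S \<or> snd q \<in> S" by (auto simp: disjnt_def)
  define f where "f q = (if fst q \<in> S then fst q else snd q)" for q :: "'a \<times> 'a"
  have "inj_on f M"
    using assms(1) by (intro inj_onI) (auto simp: f_def pairwise_def disjnt_def split: if_splits)
  moreover have "f ` M \<subseteq> S" using hit by (auto simp: f_def)
  ultimately have "card M \<le> card S" using card_inj_on_le assms(2) by blast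
  with assms(3) show False by simp
qed

lemma disjoint_transversal:
  assumes "finite I" "finite F"
    and "\<And>i. i \<in> I \<Longrightarrow> pairwise (\<lambda>p q. disjnt (ends p) (ends q)) (M i)"
    and "\<And>i. i \<in> I \<Longrightarrow> card F + 2 * (card I - 1) < card (M i)"
  shows "\<exists>p. (\<forall>i\<in>I. p i \<in> M i \<and> disjnt (ends (p i)) F) \<and>
             pairwise (\<lambda>i j. disjnt (ends (p i)) (ends (p j))) I"
  using assms(1,3,4)
proof (induction I rule: finite_induct)
  case empty
  then show ?case by simp
next
  case (insert i I)
  have "card F + 2 * (card I - 1) < card (M j)" if "j \<in> I" for j
    using insert.prems(2)[of j] that insert.hyps by auto
  with insert.IH insert.prems(1) obtain p where p: "\<forall>j\<in>I. p j \<in> M j \<and> disjnt (ends (p j)) F"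
      and p_disj: "pairwise (\<lambda>j k. disjnt (ends (p j)) (ends (p k))) I"
    by auto
  define S where "S = F \<union> (\<Union>j\<in>I. ends (p j))"
  have "card S \<le> card F + 2 * card I"
    unfolding S_def
    by (rule order_trans[OF card_Un_le add_left_mono[OF card_UN_ends_le[OF insert.hyps(1)]]])
  also have "\<dots> < card (M i)"
    using insert.prems(2)[of i] insert.hyps by auto
  finally have "card S < card (M i)" .
  moreover have "finite S"
    unfolding S_def using insert.hyps(1) assms(2) by blast
  ultimately obtain q where q: "q \<in> M i" "disjnt (ends q) S"
    using exists_pair_avoiding insert.prems(1)[of i] by blast
  define p' where "p' = p(i := q)"
  have new: "disjnt (ends (p' i)) (ends (p' j))" if "j \<in> I" for j
    using q(2) that insert.hyps(2) unfolding S_def p'_def by (auto simp: disjnt_def)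
  have old: "pairwise (\<lambda>j k. disjnt (ends (p' j)) (ends (p' k))) I"
    using p_disj insert.hyps(2) unfolding p'_def by (auto simp: pairwise_def)
  have "pairwise (\<lambda>j k. disjnt (ends (p' j)) (ends (p' k))) (insert i I)"
    unfolding pairwise_insert using new old disjnt_sym by blast
  moreover have "\<forall>j\<in>insert i I. p' j \<in> M j \<and> disjnt (ends (p' j)) F"
    using p q insert.hyps(2) unfolding S_def p'_def by auto
  ultimately show ?case by blast
qed

text \<open>The cyclic sequence \<open>c, w 1, x 2, w 2, x 3, \<dots>, x l, w l\<close> of length \<open>2 l\<close>.\<close>
definition interleave :: "'b \<Rightarrow> (nat \<Rightarrow> 'b) \<Rightarrow> (nat \<Rightarrow> 'b) \<Rightarrow> nat \<Rightarrow> 'b" where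
  "interleave c w x k = (if k = 0 then c else if odd k then w ((k + 1) div 2) else x (k div 2 + 1))"

lemma interleave_0 [simp]: "interleave c w x 0 = c"
  and interleave_Suc_double [simp]: "interleave c w x (Suc (2 * i)) = w (Suc i)"
  and interleave_double [simp]: "0 < i \<Longrightarrow> interleave c w x (2 * i) = x (Suc i)"
  by (simp_all add: interleave_def)

lemma interleave_index_cases [consumes 1, case_names first odd even]:
  fixes k l :: nat
  assumes "k < 2 * l"
  obtains "k = 0" | i where "i < l" "k = Suc (2 * i)" | i where "0 < i" "i < l" "k = 2 * i"
proof (cases "even k")
  case True
  then obtain i where "k = 2 * i" by (rule evenE)
  then show thesis using that(1,3) assms by (cases "i = 0") auto
next
  case False
  then obtain i where "k = Suc (2 * i)" by (rule oddE) simp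
  then show thesis using that(2) assms by simp
qed

lemma interleave_all:
  assumes "k < 2 * l" "P c" "\<And>i. i \<in> {1..l} \<Longrightarrow> P (w i)" "\<And>i. i \<in> {2..l} \<Longrightarrow> P (x i)"
  shows "P (interleave c w x k)"
  using assms(1) by (cases rule: interleave_index_cases) (auto intro: assms(2-4))

lemma pairwise_interleave:
  assumes "symp Q"
    and "\<And>i. i \<in> {1..l} \<Longrightarrow> Q c (w i)" "\<And>i. i \<in> {2..l} \<Longrightarrow> Q c (x i)"
    and "\<And>i j. i \<in> {1..l} \<Longrightarrow> j \<in> {1..l} \<Longrightarrow> i \<noteq> j \<Longrightarrow> Q (w i) (w j)"
    and "\<And>i j. i \<in> {2..l} \<Longrightarrow> j \<in> {2..l} \<Longrightarrow> i \<noteq> j \<Longrightarrow> Q (x i) (x j)"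
    and "\<And>i j. i \<in> {1..l} \<Longrightarrow> j \<in> {2..l} \<Longrightarrow> Q (w i) (x j)"
  shows "pairwise (\<lambda>k k'. Q (interleave c w x k) (interleave c w x k')) {..<2 * l}"
proof (rule pairwiseI)
  have w_c: "Q (w i) c" if "i \<in> {1..l}" for i using assms(1,2) that by (blast dest: sympD)
  have x_c: "Q (x i) c" if "i \<in> {2..l}" for i using assms(1,3) that by (blast dest: sympD)
  have x_w: "Q (x j) (w i)" if "i \<in> {1..l}" "j \<in> {2..l}" for i j
    using assms(1,6) that by (blast dest: sympD)
  fix k k' assume "k \<in> {..<2 * l}" "k' \<in> {..<2 * l}" "k \<noteq> k'"
  then have k: "k < 2 * l" and k': "k' < 2 * l" and "k \<noteq> k'" by auto
  from k show "Q (interleave c w x k) (interleave c w x k')"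
  proof (cases rule: interleave_index_cases)
    case first
    from k' \<open>k \<noteq> k'\<close> show ?thesis
      by (cases rule: interleave_index_cases) (use first in \<open>auto intro: assms(2,3)\<close>)
  next
    case (odd i)
    from k' \<open>k \<noteq> k'\<close> show ?thesis
      by (cases rule: interleave_index_cases) (use odd in \<open>auto intro: assms(4,6) w_c\<close>)
  next
    case (even i)
    from k' \<open>k \<noteq> k'\<close> show ?thesis
      by (cases rule: interleave_index_cases) (use even in \<open>auto intro: assms(5) x_c x_w\<close>)
  qed
qed

lemma interleave_cycle:
  assumes "k < 2 * l" "R c (w 1)" "R (w l) c"
    and "\<And>i. i \<in> {2..l} \<Longrightarrow> R (w (i - 1)) (x i) \<and> R (x i) (w i)"
  shows "R (interleave c w x k) (interleave c w x (Suc k mod (2 * l)))"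
  using assms(1)
proof (cases rule: interleave_index_cases)
  case first
  then have "Suc k mod (2 * l) = Suc (2 * 0)" using assms(1) by simp
  then show ?thesis using first assms(2) interleave_Suc_double[of c w x 0] by simp
next
  case (odd i)
  show ?thesis
  proof (cases "Suc i = l")
    case True
    then have "Suc k = 2 * l" using odd by simp
    then have "Suc k mod (2 * l) = 0" by simp
    then show ?thesis using odd True assms(3) by simp
  next
    case False
    then have "Suc k mod (2 * l) = 2 * Suc i" using odd by simp
    then show ?thesis
      using odd False assms(4)[of "Suc (Suc i)"] interleave_double[of "Suc i" c w x] by simp
  qed
next
  case (even i)
  then have "Suc k mod (2 * l) = Suc (2 * i)" by simp
  then show ?thesis using even assms(4)[of "Suc i"] by simp
qed

lemma has_prism_copyI:
  fixes r :: "nat \<Rightarrow> 'a \<times> 'a"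
  assumes "sgraph V E"
    and "pairwise (\<lambda>i j. disjnt (ends (r i)) (ends (r j))) {..<2 * l}"
    and "\<And>i. i < 2 * l \<Longrightarrow> E (fst (r i)) (snd (r i))"
    and "\<And>i. i < 2 * l \<Longrightarrow>
           E (fst (r i)) (fst (r (Suc i mod (2 * l)))) \<and> E (snd (r i)) (snd (r (Suc i mod (2 * l))))"
  shows "has_prism_copy l V E"
proof -
  have edge: "E x y \<Longrightarrow> x \<in> V \<and> y \<in> V \<and> x \<noteq> y" for x y
    using assms(1) by (auto simp: sgraph_def)
  have sep: "fst (r i) \<noteq> fst (r j) \<and> fst (r i) \<noteq> snd (r j) \<and> snd (r i) \<noteq> snd (r j)"
    if "i < 2 * l" "j < 2 * l" "i \<noteq> j" for i j
    using pairwiseD[OF assms(2)] that by (simp add: disjnt_def)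
  have "inj_on (fst \<circ> r) {..<2 * l}" "inj_on (snd \<circ> r) {..<2 * l}"
    by (auto intro!: inj_onI dest: sep)
  moreover have "(fst \<circ> r) ` {..<2 * l} \<inter> (snd \<circ> r) ` {..<2 * l} = {}"
    using sep edge assms(3) by (auto simp: disjoint_iff) metis
  moreover have "(fst \<circ> r) ` {..<2 * l} \<subseteq> V" "(snd \<circ> r) ` {..<2 * l} \<subseteq> V"
    using edge assms(3) by auto
  ultimately show ?thesis
    unfolding has_prism_copy_def using assms(3,4) by (intro exI[of _ "fst \<circ> r"] exI[of _ "snd \<circ> r"]) auto
qed

lemma rich_chain_rungs:
  assumes "2 \<le> l" "finite F" "card F \<le> 2 * l + 2"
    and "\<forall>i\<in>{2..l}. rich l E (w (i - 1)) (z (i - 1)) (w i) (z i)"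
  obtains p where
    "\<And>i. i \<in> {2..l} \<Longrightarrow> E (fst (p i)) (snd (p i)) \<and> E (w (i - 1)) (fst (p i)) \<and>
      E (fst (p i)) (w i) \<and> E (z (i - 1)) (snd (p i)) \<and> E (snd (p i)) (z i)"
    "\<And>i. i \<in> {2..l} \<Longrightarrow> disjnt (ends (p i)) F"
    "pairwise (\<lambda>i j. disjnt (ends (p i)) (ends (p j))) {2..l}"
proof -
  define good where "good i = {(x, y). E x y \<and> E (w (i - 1)) x \<and> E x (w i) \<and>
    E (z (i - 1)) y \<and> E y (z i)}" for i
  have "\<forall>i\<in>{2..l}. \<exists>M. M \<subseteq> good i \<and> 4 * l \<le> card M \<and> pairwise (\<lambda>p q. disjnt (ends p) (ends q)) M"
    using assms(4) unfolding rich_def pairwise_def disjnt_def good_def by fast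
  then obtain M where M: "\<And>i. i \<in> {2..l} \<Longrightarrow> M i \<subseteq> good i \<and> 4 * l \<le> card (M i) \<and>
      pairwise (\<lambda>p q. disjnt (ends p) (ends q)) (M i)"
    by (fastforce dest: bchoice)
  have "card F + 2 * (card {2..l} - 1) < card (M i)" if "i \<in> {2..l}" for i
    using conjunct1[OF conjunct2[OF M[OF that]]] assms(1,3) by simp
  then obtain p where p: "\<forall>i\<in>{2..l}. p i \<in> M i \<and> disjnt (ends (p i)) F"
      and p_disj: "pairwise (\<lambda>i j. disjnt (ends (p i)) (ends (p j))) {2..l}"
    using disjoint_transversal[of "{2..l}" F M] M assms(2) by auto
  have in_good: "p i \<in> good i" if "i \<in> {2..l}" for i
    using M[OF that] p that by blast
  have "E (fst (p i)) (snd (p i)) \<and> E (w (i - 1)) (fst (p i)) \<and>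
      E (fst (p i)) (w i) \<and> E (z (i - 1)) (snd (p i)) \<and> E (snd (p i)) (z i)" if "i \<in> {2..l}" for i
    using in_good[OF that] by (cases "p i") (simp add: good_def)
  with p p_disj show thesis by (intro that) auto
qed

theorem lemma5p5:
  fixes V :: "'a set" and E :: "'a \<Rightarrow> 'a \<Rightarrow> bool" and l :: nat
    and u v :: 'a and w z :: "nat \<Rightarrow> 'a"
  assumes "l \<ge> 2"
    and "sgraph V E" and "bipartite V E"
    and "E u v"
    and "\<forall>i \<in> {1..l}. E (w i) (z i)"
    and "\<forall>i \<in> {1..l}. \<forall>j \<in> {1..l}. i \<noteq> j \<longrightarrow> {w i, z i} \<inter> {w j, z j} = {}"
    and "\<forall>i \<in> {1..l}. w i \<in> nbhd E v - {u}"
    and "\<forall>i \<in> {1..l}. z i \<in> nbhd E u - {v}"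
    and "\<forall>i \<in> {2..l}. rich l E (w (i - 1)) (z (i - 1)) (w i) (z i)"
  shows "has_prism_copy l V E"
proof -
  have sym: "E x y \<Longrightarrow> E y x" and irrefl: "E x y \<Longrightarrow> x \<noteq> y" for x y
    using assms(2) by (auto simp: sgraph_def)
  define F where "F = ends (v, u) \<union> (\<Union>i\<in>{1..l}. ends (w i, z i))"
  have "card F \<le> 2 + 2 * card {1..l}"
    unfolding F_def by (rule order_trans[OF card_Un_le add_mono[OF card_ends_le card_UN_ends_le]]) simp
  then have card_F: "card F \<le> 2 * l + 2" by simp
  have "finite F" unfolding F_def by simp
  obtain p where p_edges: "\<And>i. i \<in> {2..l} \<Longrightarrow> E (fst (p i)) (snd (p i)) \<and>
        E (w (i - 1)) (fst (p i)) \<and> E (fst (p i)) (w i) \<and> E (z (i - 1)) (snd (p i)) \<and> E (snd (p i)) (z i)"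
      and p: "\<And>i. i \<in> {2..l} \<Longrightarrow> disjnt (ends (p i)) F"
      and p_disj: "pairwise (\<lambda>i j. disjnt (ends (p i)) (ends (p j))) {2..l}"
    using rich_chain_rungs[OF assms(1) \<open>finite F\<close> card_F assms(9)] by blast
  have w_z: "E v (w i) \<and> E u (z i) \<and> E (w i) (z i) \<and> {w i, z i} \<inter> {v, u} = {}" if "i \<in> {1..l}" for i
    using assms(5,7,8) that irrefl by (auto simp: nbhd_def)
  define r where "r = interleave (v, u) (\<lambda>i. (w i, z i)) p"
  show ?thesis
  proof (rule has_prism_copyI[OF assms(2), of r])
    show "pairwise (\<lambda>i j. disjnt (ends (r i)) (ends (r j))) {..<2 * l}"
      unfolding r_def
    proof (rule pairwise_interleave)
      show "symp (\<lambda>p q. disjnt (ends p) (ends q))" by (rule sympI) (rule disjnt_sym)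
    qed (use assms(6) w_z p p_disj in \<open>auto simp: F_def disjnt_def pairwise_def\<close>)
  next
    fix k assume k: "k < 2 * l"
    show "E (fst (r k)) (snd (r k))"
      unfolding r_def
      by (rule interleave_all[where P = "\<lambda>q. E (fst q) (snd q)", OF k])
         (use assms(4) w_z p_edges sym in auto)
    show "E (fst (r k)) (fst (r (Suc k mod (2 * l)))) \<and> E (snd (r k)) (snd (r (Suc k mod (2 * l))))"
      unfolding r_def
      by (rule interleave_cycle[where R = "\<lambda>q q'. E (fst q) (fst q') \<and> E (snd q) (snd q')", OF k])
         (use assms(1) w_z p_edges sym in auto)
  qed
qed

end
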